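(* Every $(P_3\cup K_1)$-free graph is perfectly divisible.
   Context: All graphs are finite and simple. $P_3\cup K_1$ is the disjoint union of a path on three vertices and an isolated vertex. A graph is $H$-free if it has no induced subgraph isomorphic to $H$. A graph is perfect if every induced subgraph $H$ satisfies $\chi(H)=\omega(H)$. A graph $G$ is perfectly divisible if for every induced subgraph $H$ of $G$, $V(H)$ can be partitioned into two sets $A,B$ such that $H[A]$ is perfect and $\omega(H[B])<\omega(H)$. *)

theory Defs
  imports Main
begin

text \<open>A finite simple graph is a finite vertex set V with a symmetric irreflexive
adjacency relation E (only its restriction to V matters).\<close>

definition graph :: "'a set \<Rightarrow> ('a \<Rightarrow> 'a \<Rightarrow> bool) \<Rightarrow> bool" where
  "graph V E \<longleftrightarrow> finite V \<and> (\<forall>x\<in>V. \<forall>y\<in>V. E x y \<longleftrightarrow> E y x) \<and> (\<forall>x\<in>V. \<not> E x x)"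

text \<open>Induced subgraphs are given by a vertex subset S of V, keeping the relation E.\<close>

definition clique :: "('a \<Rightarrow> 'a \<Rightarrow> bool) \<Rightarrow> 'a set \<Rightarrow> bool" where
  "clique E K \<longleftrightarrow> (\<forall>x\<in>K. \<forall>y\<in>K. x \<noteq> y \<longrightarrow> E x y)"

definition omega :: "'a set \<Rightarrow> ('a \<Rightarrow> 'a \<Rightarrow> bool) \<Rightarrow> nat" where
  "omega S E = Max {card K | K. K \<subseteq> S \<and> clique E K}"

definition proper_colouring :: "'a set \<Rightarrow> ('a \<Rightarrow> 'a \<Rightarrow> bool) \<Rightarrow> ('a \<Rightarrow> nat) \<Rightarrow> nat \<Rightarrow> bool" where
  "proper_colouring S E c k \<longleftrightarrow> (\<forall>x\<in>S. c x < k) \<and> (\<forall>x\<in>S. \<forall>y\<in>S. E x y \<longrightarrow> c x \<noteq> c y)"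

definition chi :: "'a set \<Rightarrow> ('a \<Rightarrow> 'a \<Rightarrow> bool) \<Rightarrow> nat" where
  "chi S E = (LEAST k. \<exists>c. proper_colouring S E c k)"

definition perfect :: "'a set \<Rightarrow> ('a \<Rightarrow> 'a \<Rightarrow> bool) \<Rightarrow> bool" where
  "perfect S E \<longleftrightarrow> (\<forall>T\<subseteq>S. chi T E = omega T E)"

definition has_induced :: "'a set \<Rightarrow> ('a \<Rightarrow> 'a \<Rightarrow> bool) \<Rightarrow> 'b set \<Rightarrow> ('b \<Rightarrow> 'b \<Rightarrow> bool) \<Rightarrow> bool" where
  "has_induced S E VH EH \<longleftrightarrow>
     (\<exists>f. inj_on f VH \<and> f ` VH \<subseteq> S \<and> (\<forall>x\<in>VH. \<forall>y\<in>VH. E (f x) (f y) \<longleftrightarrow> EH x y))"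

definition H_free :: "'a set \<Rightarrow> ('a \<Rightarrow> 'a \<Rightarrow> bool) \<Rightarrow> 'b set \<Rightarrow> ('b \<Rightarrow> 'b \<Rightarrow> bool) \<Rightarrow> bool" where
  "H_free S E VH EH \<longleftrightarrow> \<not> has_induced S E VH EH"

definition P3K1_V :: "nat set" where "P3K1_V = {0,1,2,3}"
definition P3K1_E :: "nat \<Rightarrow> nat \<Rightarrow> bool" where
  "P3K1_E x y \<longleftrightarrow> {x,y} = {0,1} \<or> {x,y} = {1,2::nat}"

definition perfectly_divisible :: "'a set \<Rightarrow> ('a \<Rightarrow> 'a \<Rightarrow> bool) \<Rightarrow> bool" where
  "perfectly_divisible V E \<longleftrightarrow>
     (\<forall>H\<subseteq>V. H \<noteq> {} \<longrightarrow> (\<exists>A B. A \<union> B = H \<and> A \<inter> B = {} \<and> perfect A E \<and> omega B E < omega H E))"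

end

theory Submission
  imports Defs
begin

text \<open>Pick any vertex v of H and let B be its neighbourhood in H. Every clique of B extends
  by v, so omega(B) < omega(H). The non-neighbours A of v (v included) induce a P3-free graph,
  since a P3 in A together with v would be an induced P3 \<union> K1. A P3-free graph is a disjoint
  union of cliques, and colouring each clique bijectively shows that such graphs are perfect.\<close>

lemma graph_subset: "graph V E \<Longrightarrow> S \<subseteq> V \<Longrightarrow> graph S E"
  unfolding graph_def by (auto intro: finite_subset)

lemma finite_clique_cards:
  "finite T \<Longrightarrow> finite {card K | K. K \<subseteq> T \<and> clique E K}"
  by (rule finite_subset[of _ "card ` Pow T"]) auto

lemma card_clique_le_omega:
  assumes "finite T" "K \<subseteq> T" "clique E K"
  shows "card K \<le> omega T E"
  unfolding omega_def using finite_clique_cards[OF assms(1)] assms(2,3) by (intro Max_ge) auto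

lemma omega_attained:
  assumes "finite T"
  obtains K where "K \<subseteq> T" "clique E K" "card K = omega T E"
proof -
  have "0 \<in> {card K | K. K \<subseteq> T \<and> clique E K}"
    by (auto intro!: exI[of _ "{}"] simp: clique_def)
  then have "omega T E \<in> {card K | K. K \<subseteq> T \<and> clique E K}"
    unfolding omega_def using finite_clique_cards[OF assms] by (intro Max_in) auto
  then show ?thesis using that by auto
qed

lemma omega_le_colours:
  assumes "finite T" "proper_colouring T E c k"
  shows "omega T E \<le> k"
proof -
  obtain K where K: "K \<subseteq> T" "clique E K" "card K = omega T E"
    using omega_attained[OF assms(1)] by blast
  have "inj_on c K"
    using K assms(2) unfolding inj_on_def clique_def proper_colouring_def by blast
  moreover have "c ` K \<subseteq> {..<k}" using K assms(2) unfolding proper_colouring_def by auto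
  ultimately have "card K \<le> card {..<k}" by (intro card_inj_on_le) auto
  then show ?thesis using K by simp
qed

lemma omega_neighbourhood_less:
  assumes "graph H E" "v \<in> H"
  shows "omega {u \<in> H. E v u} E < omega H E"
proof -
  let ?B = "{u \<in> H. E v u}"
  have finH: "finite H" and finB: "finite ?B" using assms(1) unfolding graph_def by auto
  obtain K where K: "K \<subseteq> ?B" "clique E K" "card K = omega ?B E"
    using omega_attained[OF finB] by blast
  have "v \<notin> K" using K assms unfolding graph_def by auto
  moreover have "clique E (insert v K)"
    using K assms unfolding clique_def graph_def by (auto simp: subset_iff)
  moreover have "insert v K \<subseteq> H" using K assms(2) by auto
  ultimately have "card (insert v K) \<le> omega H E"
    using card_clique_le_omega[OF finH] by blast
  moreover have "finite K" using finite_subset[OF K(1) finB] .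
  ultimately have "Suc (card K) \<le> omega H E" using \<open>v \<notin> K\<close> by simp
  then show ?thesis using K(3) by simp
qed

text \<open>G[S] is P3-free, i.e. a disjoint union of cliques.\<close>

definition cluster_graph :: "'a set \<Rightarrow> ('a \<Rightarrow> 'a \<Rightarrow> bool) \<Rightarrow> bool" where
  "cluster_graph S E \<longleftrightarrow> (\<forall>x\<in>S. \<forall>y\<in>S. \<forall>z\<in>S. E x y \<longrightarrow> E y z \<longrightarrow> x \<noteq> z \<longrightarrow> E x z)"

lemma cluster_graph_subset: "cluster_graph S E \<Longrightarrow> T \<subseteq> S \<Longrightarrow> cluster_graph T E"
  unfolding cluster_graph_def by blast

lemma chi_eq_omega_cluster_graph:
  assumes "graph T E" "cluster_graph T E"
  shows "chi T E = omega T E"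
proof -
  have fin: "finite T" and sym: "\<forall>x\<in>T. \<forall>y\<in>T. E x y \<longrightarrow> E y x" and irr: "\<forall>x\<in>T. \<not> E x x"
    and tr: "\<forall>x\<in>T. \<forall>y\<in>T. \<forall>z\<in>T. E x y \<longrightarrow> E y z \<longrightarrow> x \<noteq> z \<longrightarrow> E x z"
    using assms unfolding graph_def cluster_graph_def by blast+
  define cls where "cls x = {y \<in> T. x = y \<or> E x y}" for x
  define num where "num C = (SOME h. bij_betw h C {0..<card C})" for C :: "'a set"
  define c where "c x = num (cls x) x" for x
  have num_bij: "bij_betw (num C) C {0..<card C}" if "finite C" for C
    unfolding num_def using ex_bij_betw_finite_nat[OF that] by (rule someI_ex)
  have cls_finite: "finite (cls x)" for x unfolding cls_def using fin by auto
  have cls_clique: "clique E (cls x)" if "x \<in> T" for x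
    unfolding clique_def cls_def using that sym tr by blast
  have cls_eq: "cls x = cls y" if "x \<in> T" "y \<in> T" "E x y" for x y
    unfolding cls_def using that sym tr irr by blast
  have "proper_colouring T E c (omega T E)"
    unfolding proper_colouring_def
  proof safe
    fix x assume x: "x \<in> T"
    then have "x \<in> cls x" unfolding cls_def by simp
    then have "c x < card (cls x)"
      using num_bij[OF cls_finite[of x]] unfolding c_def bij_betw_def by auto
    moreover have "card (cls x) \<le> omega T E"
      using card_clique_le_omega[OF fin _ cls_clique[OF x]] unfolding cls_def by auto
    ultimately show "c x < omega T E" by simp
  next
    fix x y assume xy: "x \<in> T" "y \<in> T" "E x y" "c x = c y"
    have "x \<noteq> y" using xy irr by auto
    moreover have "x \<in> cls x" "y \<in> cls x" using xy unfolding cls_def by auto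
    moreover have "c y = num (cls x) y" using cls_eq[OF xy(1-3)] unfolding c_def by simp
    ultimately show False using xy(4) num_bij[OF cls_finite[of x]]
      unfolding c_def bij_betw_def inj_on_def by metis
  qed
  then show ?thesis unfolding chi_def
    by (intro Least_equality) (auto intro: omega_le_colours[OF fin])
qed

lemma perfect_cluster_graph:
  assumes "graph S E" "cluster_graph S E"
  shows "perfect S E"
  unfolding perfect_def
proof (intro allI impI)
  fix T assume "T \<subseteq> S"
  then show "chi T E = omega T E"
    using chi_eq_omega_cluster_graph graph_subset[OF assms(1)] cluster_graph_subset[OF assms(2)]
    by blast
qed

lemma has_induced_P3K1:
  assumes "graph V E" "x \<in> V" "y \<in> V" "z \<in> V" "v \<in> V"
    and "E x y" "E y z" "\<not> E x z" "x \<noteq> z"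
    and "\<not> E v x" "\<not> E v y" "\<not> E v z"
  shows "has_induced V E P3K1_V P3K1_E"
proof -
  have sym: "\<forall>a\<in>V. \<forall>b\<in>V. E a b \<longleftrightarrow> E b a" and irr: "\<forall>a\<in>V. \<not> E a a"
    using assms(1) unfolding graph_def by auto
  have mirrored: "E y x" "E z y" "\<not> E z x" "\<not> E x v" "\<not> E y v" "\<not> E z v"
    using assms(2-5,6-8,10-12) sym by blast+
  have loops: "\<not> E x x" "\<not> E y y" "\<not> E z z" "\<not> E v v" using assms(2-5) irr by auto
  have distinct: "x \<noteq> y" "y \<noteq> z" "x \<noteq> v" "y \<noteq> v" "z \<noteq> v"
    using mirrored assms(2-4,6,7,10-12) irr by auto
  define f where "f n = (if n = 0 then x else if n = 1 then y else if n = 2 then z else v)"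
    for n :: nat
  show ?thesis
    unfolding has_induced_def
  proof (intro exI conjI)
    show "inj_on f P3K1_V"
      unfolding inj_on_def P3K1_V_def f_def using distinct assms(9) by auto
    show "f ` P3K1_V \<subseteq> V" unfolding P3K1_V_def f_def using assms(2-5) by auto
    show "\<forall>a\<in>P3K1_V. \<forall>b\<in>P3K1_V. E (f a) (f b) = P3K1_E a b"
      unfolding P3K1_V_def f_def P3K1_E_def using assms(6-8,10-12) mirrored loops
      by (auto simp: doubleton_eq_iff)
  qed
qed

lemma cluster_graph_non_neighbours:
  assumes "graph V E" "H_free V E P3K1_V P3K1_E" "v \<in> V"
  shows "cluster_graph {u \<in> V. \<not> E v u} E"
  unfolding cluster_graph_def
proof (intro ballI impI)
  fix x y z assume x: "x \<in> {u \<in> V. \<not> E v u}" and y: "y \<in> {u \<in> V. \<not> E v u}"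
    and z: "z \<in> {u \<in> V. \<not> E v u}" and path: "E x y" "E y z" "x \<noteq> z"
  show "E x z"
  proof (rule ccontr)
    assume "\<not> E x z"
    moreover have "x \<in> V" "y \<in> V" "z \<in> V" "\<not> E v x" "\<not> E v y" "\<not> E v z"
      using x y z by simp_all
    ultimately have "has_induced V E P3K1_V P3K1_E"
      using has_induced_P3K1[OF assms(1) _ _ _ assms(3)] path by blast
    then show False using assms(2) unfolding H_free_def by simp
  qed
qed

theorem corollary3p3:
  fixes V :: "'a set" and E :: "'a \<Rightarrow> 'a \<Rightarrow> bool"
  assumes "graph V E"
    and "H_free V E P3K1_V P3K1_E"
  shows "perfectly_divisible V E"
  unfolding perfectly_divisible_def
proof (intro allI impI)
  fix H assume "H \<subseteq> V" "H \<noteq> {}"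
  then obtain v where v: "v \<in> H" "v \<in> V" by blast
  define A where "A = {u \<in> H. \<not> E v u}"
  define B where "B = {u \<in> H. E v u}"
  have graph_H: "graph H E" using assms(1) \<open>H \<subseteq> V\<close> by (rule graph_subset)
  have "A \<subseteq> {u \<in> V. \<not> E v u}" "A \<subseteq> H" using \<open>H \<subseteq> V\<close> unfolding A_def by auto
  then have "cluster_graph A E" "graph A E"
    using cluster_graph_subset[OF cluster_graph_non_neighbours[OF assms v(2)]]
      graph_subset[OF graph_H] by simp_all
  then have "perfect A E" by (intro perfect_cluster_graph)
  moreover have "omega B E < omega H E"
    unfolding B_def using graph_H v(1) by (rule omega_neighbourhood_less)
  moreover have "A \<union> B = H" "A \<inter> B = {}" unfolding A_def B_def by auto
  ultimately show "\<exists>A B. A \<union> B = H \<and> A \<inter> B = {} \<and> perfect A E \<and> omega B E < omega H E"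
    by blast
qed

end
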